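(* Let $n,m\in\mathbb{Z}$. For $x\in\mathbb{R}$, $y>0$, $k\in\mathbb{Z}$ and $y_0>0$ let \[ p_k(x,y)=\frac{1}{\pi}\frac{y}{(x-2\pi k)^2+y^2},\quad h(x,y)=\frac{1}{2\pi}\frac{\sinh y}{\cosh y-\cos x},\quad G(x,y)=\frac{1}{2\pi}\log\frac{x^2+(y+y_0)^2}{x^2+(y-y_0)^2}, \] and let \[ j(x,y)= h^{-1}\, H\nabla p_m\cdot\nabla p_n + p_n\, H\nabla p_m\cdot\nabla h^{-1} - p_m\, H\nabla p_n\cdot\nabla h^{-1}, \] all functions evaluated at $(x,y)$. Then one can take the limit as $y_0\to\infty$ under the integral sign in \[ \int_{-\infty}^\infty\int_0^\infty \frac{G(x,y)}{p_n(0,y_0)}\, j(x,y)\,dy\,dx; \] that is, these integrals are well defined for all sufficiently large $y_0$, the integral $\int_{-\infty}^\infty\int_0^\infty 2y\, j(x,y)\,dy\,dx$ is well defined, and \[ \lim_{y_0\to\infty}\int_{-\infty}^\infty\int_0^\infty \frac{G(x,y)}{p_n(0,y_0)}\, j(x,y)\,dy\,dx=\int_{-\infty}^\infty\int_0^\infty 2y\, j(x,y)\,dy\,dx. \]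
   Context: $\nabla=(\partial_x,\partial_y)$; $H$ is the matrix $\begin{pmatrix}0&-1\\1&0\end{pmatrix}$, so $H\nabla f=(-\partial_y f,\partial_x f)$; $h^{-1}$ denotes the function $1/h$; the dot denotes the Euclidean inner product in $\mathbb{R}^2$. Note $\lim_{y_0\to\infty}G(x,y)/p_n(0,y_0)=2y$ pointwise. *)

theory Defs
  imports "HOL-Analysis.Analysis"
begin

definition pk :: "int \<Rightarrow> real \<Rightarrow> real \<Rightarrow> real" where
  "pk k x y = (1 / pi) * (y / ((x - 2 * pi * of_int k)^2 + y^2))"

definition hh :: "real \<Rightarrow> real \<Rightarrow> real" where
  "hh x y = (1 / (2 * pi)) * (sinh y / (cosh y - cos x))"

definition hinv :: "real \<Rightarrow> real \<Rightarrow> real" where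
  "hinv x y = 1 / hh x y"

definition GG :: "real \<Rightarrow> real \<Rightarrow> real \<Rightarrow> real" where
  "GG y0 x y = (1 / (2 * pi)) * ln ((x^2 + (y + y0)^2) / (x^2 + (y - y0)^2))"

definition pdx :: "(real \<Rightarrow> real \<Rightarrow> real) \<Rightarrow> real \<Rightarrow> real \<Rightarrow> real" where
  "pdx f x y = deriv (\<lambda>t. f t y) x"

definition pdy :: "(real \<Rightarrow> real \<Rightarrow> real) \<Rightarrow> real \<Rightarrow> real \<Rightarrow> real" where
  "pdy f x y = deriv (\<lambda>t. f x t) y"

text \<open>H\<nabla>f \<cdot> \<nabla>g with H\<nabla>f = (-\<partial>_y f, \<partial>_x f).\<close>
definition Hgrad_dot :: "(real \<Rightarrow> real \<Rightarrow> real) \<Rightarrow> (real \<Rightarrow> real \<Rightarrow> real) \<Rightarrow> real \<Rightarrow> real \<Rightarrow> real" where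
  "Hgrad_dot f g x y = (- pdy f x y) * pdx g x y + pdx f x y * pdy g x y"

definition jj :: "int \<Rightarrow> int \<Rightarrow> real \<Rightarrow> real \<Rightarrow> real" where
  "jj m n x y = hinv x y * Hgrad_dot (pk m) (pk n) x y
              + pk n x y * Hgrad_dot (pk m) hinv x y
              - pk m x y * Hgrad_dot (pk n) hinv x y"

definition upper_half :: "(real \<times> real) set" where
  "upper_half = {z. snd z > 0}"

end

theory Submission
  imports Defs "HOL-Real_Asymp.Real_Asymp"
begin

(*
  After computing the derivatives, j is a sum of six products of a first derivative of p_m or p_n
  with h^-1, p_n, p_m or a first derivative of h^-1. Near a pole (2 pi k, 0) we have
  y h^-1 <= 2 pi ((x - 2 pi k)^2 + y^2), which cancels the singularity of the kernels; combined with
  the separation |2 pi m - 2 pi n| >= 2 of the two poles this gives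
  y |j| <= C (1 + y) / (1 + x^2 + y^2)^2.
  On the other hand G / p_n(0, y0) <= 16 y for y <= y0 / 2 and <= 16 y sqrt (y / |x|) for y > y0 / 2,
  so for large y0 the integrands are dominated by a multiple of g(|x|) f(y) with
  f(s) = min (1, s^(-3/2)) and g(s) = min (s^(-1/2), s^(-3/2)), which is integrable.
  Since G / p_n(0, y0) tends to 2 y pointwise, dominated convergence applies.
*)

lemma integrable_lborel_prod_mult:
  fixes f g :: "real \<Rightarrow> real"
  assumes f: "integrable lborel f" and g: "integrable lborel g"
  shows "integrable lborel (\<lambda>z::real \<times> real. f (fst z) * g (snd z))"
proof -
  have [measurable]: "f \<in> borel_measurable borel" "g \<in> borel_measurable borel" using f g by auto
  have "(\<integral>\<^sup>+z. ennreal (norm (f (fst z) * g (snd z))) \<partial>(lborel \<Otimes>\<^sub>M lborel))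
      = (\<integral>\<^sup>+x. \<integral>\<^sup>+y. ennreal (norm (f x) * norm (g y)) \<partial>lborel \<partial>lborel)"
    by (subst lborel.nn_integral_fst[symmetric]) (auto simp: abs_mult)
  also have "\<dots> = (\<integral>\<^sup>+x. ennreal (norm (f x)) \<partial>lborel) * (\<integral>\<^sup>+y. ennreal (norm (g y)) \<partial>lborel)"
    by (simp add: ennreal_mult nn_integral_cmult nn_integral_multc)
  also have "\<dots> < \<infinity>" using f g by (simp add: integrable_iff_bounded ennreal_mult_less_top)
  finally have "integrable (lborel \<Otimes>\<^sub>M lborel) (\<lambda>z::real \<times> real. f (fst z) * g (snd z))"
    by (intro integrableI_bounded) measurable
  then show ?thesis by (simp add: lborel_prod)
qed

lemma set_integral_dominated_convergence_at_top:
  fixes s :: "real \<Rightarrow> 'a \<Rightarrow> real" and f w :: "'a \<Rightarrow> real"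
  assumes "set_borel_measurable M A f" and "\<And>t. set_borel_measurable M A (s t)"
    and "set_integrable M A w"
    and "AE x\<in>A in M. ((\<lambda>t. s t x) \<longlongrightarrow> f x) at_top"
    and "\<forall>\<^sub>F t in at_top. AE x\<in>A in M. \<bar>s t x\<bar> \<le> w x"
  shows "(\<forall>\<^sub>F t in at_top. set_integrable M A (s t)) \<and> set_integrable M A f
    \<and> ((\<lambda>t. LINT x:A|M. s t x) \<longlongrightarrow> (LINT x:A|M. f x)) at_top"
proof -
  let ?s = "\<lambda>t x. indicator A x * s t x" and ?f = "\<lambda>x. indicator A x * f x"
    and ?w = "\<lambda>x. indicator A x * w x"
  have meas: "?f \<in> borel_measurable M" "\<And>t. ?s t \<in> borel_measurable M" and int: "integrable M ?w"
    using assms(1-3) by (simp_all add: set_borel_measurable_def set_integrable_def)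
  have lim: "AE x in M. ((\<lambda>t. ?s t x) \<longlongrightarrow> ?f x) at_top"
    using assms(4) by eventually_elim (auto simp: indicator_def)
  have bound: "\<forall>\<^sub>F t in at_top. AE x in M. norm (?s t x) \<le> ?w x"
    using assms(5)
  proof eventually_elim
    case (elim t)
    then show ?case by eventually_elim (simp add: indicator_def)
  qed
  have "\<forall>\<^sub>F t in at_top. integrable M (?s t)"
    using bound
  proof eventually_elim
    case (elim t)
    then have "AE x in M. norm (?s t x) \<le> norm (?w x)" by eventually_elim auto
    then show ?case by (rule Bochner_Integration.integrable_bound[OF int meas(2)])
  qed
  with integral_dominated_convergence_at_top[OF meas int lim bound]
    integrable_dominated_convergence_at_top[OF meas int lim bound]
  show ?thesis by (simp add: set_integrable_def set_lebesgue_integral_def)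
qed

section \<open>Explicit derivatives\<close>

definition poisson :: "real \<Rightarrow> real \<Rightarrow> real \<Rightarrow> real" where
  "poisson a x y = y / (pi * ((x - a)^2 + y^2))"

definition dx_poisson :: "real \<Rightarrow> real \<Rightarrow> real \<Rightarrow> real" where
  "dx_poisson a x y = - (2 * (x - a) * y) / (pi * ((x - a)^2 + y^2)^2)"

definition dy_poisson :: "real \<Rightarrow> real \<Rightarrow> real \<Rightarrow> real" where
  "dy_poisson a x y = ((x - a)^2 - y^2) / (pi * ((x - a)^2 + y^2)^2)"

definition dx_hinv :: "real \<Rightarrow> real \<Rightarrow> real" where
  "dx_hinv x y = 2 * pi * sin x / sinh y"

definition dy_hinv :: "real \<Rightarrow> real \<Rightarrow> real" where
  "dy_hinv x y = 2 * pi * (cos x * cosh y - 1) / (sinh y)^2"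

definition jj_expl :: "real \<Rightarrow> real \<Rightarrow> real \<Rightarrow> real \<Rightarrow> real" where
  "jj_expl a b x y =
       hinv x y * (- dy_poisson a x y * dx_poisson b x y + dx_poisson a x y * dy_poisson b x y)
     + poisson b x y * (- dy_poisson a x y * dx_hinv x y + dx_poisson a x y * dy_hinv x y)
     - poisson a x y * (- dy_poisson b x y * dx_hinv x y + dx_poisson b x y * dy_hinv x y)"

lemma pk_eq_poisson: "pk k x y = poisson (2 * pi * of_int k) x y"
  by (simp add: pk_def poisson_def)

lemma hinv_eq: "hinv x y = 2 * pi * (cosh y - cos x) / sinh y"
  by (simp add: hinv_def hh_def)

lemma dist_sq_pos: "y \<noteq> 0 \<Longrightarrow> 0 < (x - a)^2 + (y::real)^2"
  by (simp add: add_nonneg_pos)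

lemma has_real_derivative_poisson_x:
  assumes "y \<noteq> 0"
  shows "((\<lambda>t. poisson a t y) has_real_derivative dx_poisson a x y) (at x)"
proof -
  define d where "d = (x - a)^2 + y^2"
  have "d \<noteq> 0" unfolding d_def using dist_sq_pos[OF assms] by (rule less_imp_neq[symmetric])
  have "((\<lambda>t. y / (pi * ((t - a)^2 + y^2))) has_real_derivative
          - (y * (pi * (2 * (x - a)))) / (pi * d)^2) (at x)"
    using \<open>d \<noteq> 0\<close> unfolding d_def by (auto intro!: derivative_eq_intros simp: power2_eq_square)
  moreover have "- (y * (pi * (2 * (x - a)))) / (pi * d)^2 = dx_poisson a x y"
    unfolding dx_poisson_def d_def[symmetric] using \<open>d \<noteq> 0\<close>
    by (simp add: field_simps power2_eq_square)
  ultimately show ?thesis unfolding poisson_def by simp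
qed

lemma has_real_derivative_poisson_y:
  assumes "y \<noteq> 0"
  shows "((\<lambda>t. poisson a x t) has_real_derivative dy_poisson a x y) (at y)"
proof -
  define d where "d = (x - a)^2 + y^2"
  have "d \<noteq> 0" unfolding d_def using dist_sq_pos[OF assms] by (rule less_imp_neq[symmetric])
  have "((\<lambda>t. t / (pi * ((x - a)^2 + t^2))) has_real_derivative
          (pi * d - y * (pi * (2 * y))) / (pi * d)^2) (at y)"
    using \<open>d \<noteq> 0\<close> unfolding d_def by (auto intro!: derivative_eq_intros simp: power2_eq_square)
  moreover have "(pi * d - y * (pi * (2 * y))) / (pi * d)^2 = dy_poisson a x y"
  proof -
    have "pi * d - y * (pi * (2 * y)) = pi * ((x - a)^2 - y^2)"
      by (simp add: d_def algebra_simps power2_eq_square)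
    then show ?thesis
      unfolding dy_poisson_def d_def[symmetric] by (simp add: power_mult_distrib power2_eq_square)
  qed
  ultimately show ?thesis unfolding poisson_def by simp
qed

lemma pdx_pk: "y \<noteq> 0 \<Longrightarrow> pdx (pk k) x y = dx_poisson (2 * pi * of_int k) x y"
  unfolding pdx_def pk_eq_poisson by (rule DERIV_imp_deriv[OF has_real_derivative_poisson_x])

lemma pdy_pk: "y \<noteq> 0 \<Longrightarrow> pdy (pk k) x y = dy_poisson (2 * pi * of_int k) x y"
  unfolding pdy_def pk_eq_poisson by (rule DERIV_imp_deriv[OF has_real_derivative_poisson_y])

lemma pdx_hinv: "y \<noteq> 0 \<Longrightarrow> pdx hinv x y = dx_hinv x y"
  unfolding pdx_def hinv_eq dx_hinv_def
  by (rule DERIV_imp_deriv) (auto intro!: derivative_eq_intros)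

lemma pdy_hinv:
  assumes "y \<noteq> 0"
  shows "pdy hinv x y = dy_hinv x y"
proof -
  have "((\<lambda>t. hinv x t) has_real_derivative dy_hinv x y) (at y)"
    unfolding hinv_eq dy_hinv_def
    using assms cosh_square_eq[of y]
    by (auto intro!: derivative_eq_intros simp: field_simps power2_eq_square) algebra
  then show ?thesis unfolding pdy_def by (rule DERIV_imp_deriv)
qed

lemma jj_eq_jj_expl:
  "y \<noteq> 0 \<Longrightarrow> jj m n x y = jj_expl (2 * pi * of_int m) (2 * pi * of_int n) x y"
  by (simp add: jj_def jj_expl_def Hgrad_dot_def pdx_pk pdy_pk pdx_hinv pdy_hinv pk_eq_poisson)

lemma jj_self: "jj m m x y = 0"
  unfolding jj_def Hgrad_dot_def by (simp add: algebra_simps)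

lemma sinh_ge_self:
  assumes "0 \<le> (y::real)"
  shows "y \<le> sinh y"
proof -
  have "sinh 0 - 0 \<le> sinh y - y"
  proof (rule DERIV_nonneg_imp_nondecreasing[OF assms])
    fix t :: real
    have "((\<lambda>t. sinh t - t) has_real_derivative (cosh t - 1)) (at t)"
      by (rule derivative_eq_intros refl)+ simp
    then show "\<exists>d. ((\<lambda>t. sinh t - t) has_real_derivative d) (at t) \<and> 0 \<le> d"
      using cosh_real_ge_1[of t] by auto
  qed
  then show ?thesis by simp
qed

lemma cosh_minus_one_ge:
  assumes "0 \<le> (y::real)"
  shows "y^2 / 2 \<le> cosh y - 1"
proof -
  have "cosh 0 - 0^2/2 \<le> cosh y - y^2/2"
  proof (rule DERIV_nonneg_imp_nondecreasing[OF assms])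
    fix t :: real assume "0 \<le> t"
    have "((\<lambda>t. cosh t - t^2/2) has_real_derivative (sinh t - t)) (at t)"
      by (auto intro!: derivative_eq_intros)
    then show "\<exists>d. ((\<lambda>t. cosh t - t^2/2) has_real_derivative d) (at t) \<and> 0 \<le> d"
      using sinh_ge_self[OF \<open>0 \<le> t\<close>] by auto
  qed
  then show ?thesis by simp
qed

lemma cosh_minus_one_le:
  assumes "0 \<le> (y::real)"
  shows "cosh y - 1 \<le> y * sinh y"
proof -
  have "0 * sinh 0 - cosh 0 \<le> y * sinh y - cosh y"
  proof (rule DERIV_nonneg_imp_nondecreasing[OF assms])
    fix t :: real assume "0 \<le> t"
    have "((\<lambda>t. t * sinh t - cosh t) has_real_derivative (t * cosh t)) (at t)"
      by (rule derivative_eq_intros refl)+ simp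
    then show "\<exists>d. ((\<lambda>t. t * sinh t - cosh t) has_real_derivative d) (at t) \<and> 0 \<le> d"
      using \<open>0 \<le> t\<close> by auto
  qed
  then show ?thesis by simp
qed

lemma cosh_le_sinh_plus_one: "0 \<le> (y::real) \<Longrightarrow> cosh y \<le> sinh y + 1"
  using cosh_minus_sinh[of y] exp_le_one_iff[of "- y"] by linarith

lemma one_minus_cos_le: "1 - cos (u::real) \<le> u^2 / 2"
proof -
  have "0^2/2 + cos 0 \<le> \<bar>u\<bar>^2/2 + cos \<bar>u\<bar>"
  proof (rule DERIV_nonneg_imp_nondecreasing[of 0 "\<bar>u\<bar>"])
    fix t :: real assume "0 \<le> t"
    have "((\<lambda>t. t^2/2 + cos t) has_real_derivative (t - sin t)) (at t)"
      by (auto intro!: derivative_eq_intros)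
    then show "\<exists>d. ((\<lambda>t. t^2/2 + cos t) has_real_derivative d) (at t) \<and> 0 \<le> d"
      using sin_x_le_x[OF \<open>0 \<le> t\<close>] by auto
  qed simp
  then show ?thesis by simp
qed

lemma cos_sin_shift_period:
  assumes "cos (a::real) = 1"
  shows "cos (x - a) = cos x" "sin (x - a) = sin x"
proof -
  have "sin a = 0" using assms sin_cos_squared_add[of a] by (simp add: power2_eq_square)
  then show "cos (x - a) = cos x" "sin (x - a) = sin x"
    using assms by (simp_all add: cos_diff sin_diff)
qed

section \<open>Pointwise bound on the integrand\<close>

lemma hinv_nonneg:
  assumes "0 < y"
  shows "0 \<le> hinv x y"
proof -
  have "0 \<le> cosh y - cos x" using cosh_real_ge_1[of y] cos_le_one[of x] by linarith
  then show ?thesis unfolding hinv_eq using assms by (auto intro!: divide_nonneg_pos)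
qed

lemma y_mult_hinv_le:
  assumes y: "0 < y"
  shows "y * hinv x y \<le> 2 * pi * (y + 2)"
proof -
  have s: "y \<le> sinh y" "0 < sinh y" using sinh_ge_self[of y] y by auto
  have "cosh y - cos x \<le> sinh y + 2"
    using cosh_le_sinh_plus_one[of y] cos_ge_minus_one[of x] y by linarith
  then have "y * (cosh y - cos x) \<le> y * (sinh y + 2)" using y by (intro mult_left_mono) auto
  also have "\<dots> \<le> (y + 2) * sinh y" using s by (simp add: algebra_simps)
  finally have "y * (cosh y - cos x) / sinh y \<le> y + 2" using s by (simp add: divide_le_eq)
  then show ?thesis unfolding hinv_eq using pi_gt_zero
    by (smt (verit) mult_left_mono times_divide_eq_right mult.assoc mult.left_commute)
qed

lemma y_mult_hinv_le_dist:
  assumes y: "0 < y" and a: "cos a = 1"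
  shows "y * hinv x y \<le> 2 * pi * ((x - a)^2 + y^2)"
proof -
  have s: "y \<le> sinh y" "0 < sinh y" using sinh_ge_self[of y] y by auto
  have "1 - cos x \<le> (x - a)^2 / 2"
    using one_minus_cos_le[of "x - a"] cos_sin_shift_period[OF a] by simp
  moreover have "cosh y - 1 \<le> y * sinh y" using cosh_minus_one_le[of y] y by simp
  ultimately have "y * (cosh y - 1) + y * (1 - cos x) \<le> y * (y * sinh y) + sinh y * ((x - a)^2 / 2)"
    using y s cosh_real_ge_1[of y] by (intro add_mono mult_mono) auto
  then have "y * (cosh y - cos x) \<le> y * (y * sinh y) + sinh y * ((x - a)^2 / 2)"
    by (simp add: algebra_simps)
  also have "\<dots> \<le> sinh y * ((x - a)^2 + y^2)"
  proof -
    have "sinh y * ((x - a)^2 / 2) \<le> sinh y * (x - a)^2" using s by (intro mult_left_mono) auto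
    then show ?thesis by (simp add: power2_eq_square algebra_simps)
  qed
  finally have "y * (cosh y - cos x) / sinh y \<le> (x - a)^2 + y^2"
    using s by (simp add: divide_le_eq mult.commute)
  then show ?thesis unfolding hinv_eq using pi_gt_zero
    by (smt (verit) mult_left_mono times_divide_eq_right mult.assoc mult.left_commute)
qed

lemma cos_cosh_bound:
  assumes y: "0 < (y::real)"
  shows "y^2 * \<bar>cos x * cosh y - 1\<bar> \<le> 2 * (sinh y)^2"
proof -
  have ss: "(sinh y)^2 = (cosh y - 1) * (cosh y + 1)"
    by (subst sinh_square_eq) (simp add: power2_eq_square algebra_simps)
  have "\<bar>cos x * cosh y - 1\<bar> \<le> cosh y + 1"
    using cos_le_one[of x] cos_ge_minus_one[of x] cosh_real_ge_1[of y]
    by (smt (verit) mult_left_le_one_le mult_nonneg_nonneg mult_le_cancel_right1 abs_le_iff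
        mult_minus_left)
  then have "y^2 * \<bar>cos x * cosh y - 1\<bar> \<le> y^2 * (cosh y + 1)" by (simp add: mult_left_mono)
  also have "\<dots> \<le> 2 * (cosh y - 1) * (cosh y + 1)"
    using cosh_minus_one_ge[of y] y cosh_real_ge_1[of y] by (intro mult_right_mono) auto
  finally show ?thesis unfolding ss by (simp only: mult.assoc)
qed

lemma cos_cosh_bound_dist:
  assumes y: "0 < (y::real)" and a: "cos a = 1"
  shows "y^2 * \<bar>cos x * cosh y - 1\<bar> \<le> (sinh y)^2 * ((x - a)^2 + y^2)"
proof -
  have c: "y^2 / 2 \<le> cosh y - 1" using cosh_minus_one_ge[of y] y by simp
  have c1: "1 \<le> cosh y" by (rule cosh_real_ge_1)
  have ss: "(sinh y)^2 = (cosh y - 1) * (cosh y + 1)"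
    by (subst sinh_square_eq) (simp add: power2_eq_square algebra_simps)
  have cx: "1 - cos x \<le> (x - a)^2 / 2" "0 \<le> 1 - cos x"
    using one_minus_cos_le[of "x - a"] cos_sin_shift_period[OF a] cos_le_one[of x] by auto
  have "cos x * cosh y - 1 = (cosh y - 1) - cosh y * (1 - cos x)" by (simp add: algebra_simps)
  then have "\<bar>cos x * cosh y - 1\<bar> \<le> (cosh y - 1) + cosh y * (1 - cos x)"
    using c1 cx by (smt (verit) mult_nonneg_nonneg)
  also have "\<dots> \<le> (cosh y - 1) + cosh y * ((x - a)^2 / 2)"
    using cx c1 by (intro add_left_mono mult_left_mono) auto
  finally have "y^2 * \<bar>cos x * cosh y - 1\<bar> \<le> y^2 * (cosh y - 1) + (y^2 * cosh y) * ((x - a)^2 / 2)"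
    by (smt (verit) distrib_left mult.assoc mult_left_mono zero_le_power2)
  also have "\<dots> \<le> (sinh y)^2 * y^2 + (2 * (sinh y)^2) * ((x - a)^2 / 2)"
  proof (intro add_mono mult_right_mono)
    have "(cosh y - 1) * 1 \<le> (cosh y - 1) * (cosh y + 1)" using c1 by (intro mult_left_mono) auto
    then have "y^2 * ((cosh y - 1) * 1) \<le> y^2 * ((cosh y - 1) * (cosh y + 1))"
      by (rule mult_left_mono) auto
    then show "y^2 * (cosh y - 1) \<le> (sinh y)^2 * y^2" unfolding ss by (simp add: mult.commute)
    have "y^2 * cosh y \<le> 2 * (cosh y - 1) * cosh y" using c c1 by (intro mult_right_mono) auto
    also have "\<dots> \<le> 2 * (cosh y - 1) * (cosh y + 1)" using c1 by (intro mult_left_mono) auto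
    finally show "y^2 * cosh y \<le> 2 * (sinh y)^2" unfolding ss by (simp only: mult.assoc)
  qed auto
  also have "\<dots> = (sinh y)^2 * ((x - a)^2 + y^2)" by (simp add: algebra_simps)
  finally show ?thesis .
qed

lemma two_abs_mult_le_sq_sum: "2 * \<bar>u\<bar> * (y::real) \<le> u^2 + y^2" if "0 \<le> y"
proof -
  have "0 \<le> (\<bar>u\<bar> - y)^2" by simp
  then show ?thesis using that by (simp add: power2_eq_square algebra_simps)
qed

lemma abs_poisson: "0 < y \<Longrightarrow> \<bar>poisson a x y\<bar> = y / (pi * ((x - a)^2 + y^2))"
  unfolding poisson_def by (simp add: abs_divide abs_mult)

lemma abs_dx_poisson:
  "0 < y \<Longrightarrow> \<bar>dx_poisson a x y\<bar> = 2 * \<bar>x - a\<bar> * y / (pi * ((x - a)^2 + y^2)^2)"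
  unfolding dx_poisson_def abs_divide abs_minus_cancel abs_mult by simp

lemma abs_dx_poisson_le:
  assumes "0 < y"
  shows "\<bar>dx_poisson a x y\<bar> \<le> 1 / (pi * ((x - a)^2 + y^2))"
proof -
  define d where "d = (x - a)^2 + y^2"
  have "0 < d" using dist_sq_pos[of y x a] assms by (simp add: d_def)
  have "\<bar>dx_poisson a x y\<bar> \<le> d / (pi * d^2)"
    unfolding abs_dx_poisson[OF assms] d_def[symmetric]
    using two_abs_mult_le_sq_sum[of y "x - a"] assms \<open>0 < d\<close>
    by (intro divide_right_mono) (auto simp: d_def)
  also have "\<dots> = 1 / (pi * d)" using \<open>0 < d\<close> by (simp add: power2_eq_square)
  finally show ?thesis by (simp add: d_def)
qed

lemma abs_dy_poisson_le:
  assumes "0 < y"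
  shows "\<bar>dy_poisson a x y\<bar> \<le> 1 / (pi * ((x - a)^2 + y^2))"
proof -
  define d where "d = (x - a)^2 + y^2"
  have "0 < d" using dist_sq_pos[of y x a] assms by (simp add: d_def)
  have "\<bar>(x - a)^2 - y^2\<bar> \<le> d" by (simp add: d_def abs_le_iff)
  then have "\<bar>dy_poisson a x y\<bar> \<le> d / (pi * d^2)"
    unfolding dy_poisson_def d_def[symmetric] using \<open>0 < d\<close>
    by (simp add: abs_divide abs_mult divide_right_mono)
  also have "\<dots> = 1 / (pi * d)" using \<open>0 < d\<close> by (simp add: power2_eq_square)
  finally show ?thesis by (simp add: d_def)
qed

(* da and db are the squared distances from (x, y) to the poles (a, 0) and (b, 0). *)
definition pole_pair_bound :: "real \<Rightarrow> real \<Rightarrow> real \<Rightarrow> real \<Rightarrow> bool" where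
  "pole_pair_bound y da db t \<longleftrightarrow> t \<le> 2 * (1 + y) / (da * db) \<and> t \<le> 2 / da \<and> t \<le> 2 / db"

lemma pole_pair_bound_commute: "pole_pair_bound y da db t \<longleftrightarrow> pole_pair_bound y db da t"
  unfolding pole_pair_bound_def by (auto simp: mult.commute)

lemma pole_pair_boundI:
  assumes da: "0 < da" and db: "0 < db" and t: "t \<le> u / (da * db)"
    and "u \<le> 2 * (1 + y)" "u \<le> 2 * da" "u \<le> 2 * db"
  shows "pole_pair_bound y da db t"
proof -
  have "u / (da * db) \<le> 2 * (1 + y) / (da * db)"
    using assms by (intro divide_right_mono) auto
  moreover have "u / (da * db) \<le> 2 * da / (da * db)"
    using assms by (intro divide_right_mono) auto
  moreover have "u / (da * db) \<le> 2 * db / (da * db)"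
    using assms by (intro divide_right_mono) auto
  ultimately show ?thesis unfolding pole_pair_bound_def using t da db by auto
qed

lemma pole_pair_bound_le:
  assumes "pole_pair_bound y da db t" and y: "0 \<le> y" and da: "0 < da" and db: "0 < db"
    and separated: "da < 1 \<Longrightarrow> 1 \<le> db" "db < 1 \<Longrightarrow> 1 \<le> da"
  shows "t \<le> 8 * (1 + y) / ((1 + da) * (1 + db))"
proof -
  have t: "t \<le> 2 * (1 + y) / (da * db)" "t \<le> 2 / da" "t \<le> 2 / db"
    using assms(1) unfolding pole_pair_bound_def by auto
  have P: "0 < (1 + da) * (1 + db)" using da db by simp
  consider "1 \<le> da" "1 \<le> db" | "da < 1" | "db < 1" by linarith
  then show ?thesis
  proof cases
    case 1
    then have "(1 + da) * (1 + db) \<le> 4 * (da * db)"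
      using mult_mono[of "1 + da" "2 * da" "1 + db" "2 * db"] by simp
    then have "8 * (1 + y) / (4 * (da * db)) \<le> 8 * (1 + y) / ((1 + da) * (1 + db))"
      using y P by (intro divide_left_mono) auto
    moreover have "8 * (1 + y) / (4 * (da * db)) = 2 * (1 + y) / (da * db)"
      using da db by (simp add: field_simps)
    ultimately show ?thesis using t(1) by linarith
  next
    case 2
    then have "(1 + da) * (1 + db) \<le> 4 * db"
      using separated(1) mult_mono[of "1 + da" 2 "1 + db" "2 * db"] db da by simp
    also have "\<dots> \<le> (4 * (1 + y)) * db" using y db by (simp add: algebra_simps)
    finally have "(1 + da) * (1 + db) \<le> (4 * (1 + y)) * db" .
    then have "8 * (1 + y) / ((4 * (1 + y)) * db) \<le> 8 * (1 + y) / ((1 + da) * (1 + db))"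
      using y P db by (intro divide_left_mono) auto
    moreover have "8 * (1 + y) / ((4 * (1 + y)) * db) = 2 / db" using y db by (simp add: divide_simps)
    ultimately show ?thesis using t(3) by linarith
  next
    case 3
    then have "(1 + da) * (1 + db) \<le> 4 * da"
      using separated(2) mult_mono[of "1 + da" "2 * da" "1 + db" 2] da db by simp
    also have "\<dots> \<le> (4 * (1 + y)) * da" using y da by (simp add: algebra_simps)
    finally have "(1 + da) * (1 + db) \<le> (4 * (1 + y)) * da" .
    then have "8 * (1 + y) / ((4 * (1 + y)) * da) \<le> 8 * (1 + y) / ((1 + da) * (1 + db))"
      using y P da by (intro divide_left_mono) auto
    moreover have "8 * (1 + y) / ((4 * (1 + y)) * da) = 2 / da" using y da by (simp add: divide_simps)
    ultimately show ?thesis using t(2) by linarith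
  qed
qed

lemma plus_two_le_pi_mult:
  assumes "0 \<le> y"
  shows "y + 2 \<le> (1 + y) * pi"
proof -
  have "y + 2 \<le> (1 + y) * 3" using assms by (simp add: algebra_simps)
  also have "\<dots> \<le> (1 + y) * pi" using pi_gt3 assms by (intro mult_left_mono) auto
  finally show ?thesis .
qed

lemma pole_pair_bound_hinv_term:
  assumes y: "0 < y" and a: "cos a = 1" and b: "cos b = 1"
  shows "pole_pair_bound y ((x - a)^2 + y^2) ((x - b)^2 + y^2)
           (y * \<bar>hinv x y * dy_poisson a x y * dx_poisson b x y\<bar>)"
proof -
  define da db where "da = (x - a)^2 + y^2" and "db = (x - b)^2 + y^2"
  have da: "0 < da" and db: "0 < db" using y by (auto simp: da_def db_def dist_sq_pos)
  define t where "t = y * hinv x y"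
  have t: "0 \<le> t" using hinv_nonneg[OF y] y by (simp add: t_def)
  have "y * \<bar>hinv x y * dy_poisson a x y * dx_poisson b x y\<bar>
      = t * \<bar>dy_poisson a x y\<bar> * \<bar>dx_poisson b x y\<bar>"
    using y hinv_nonneg[OF y] by (simp add: t_def abs_mult)
  also have "\<dots> \<le> t * (1 / (pi * da)) * (1 / (pi * db))"
    using abs_dy_poisson_le[OF y, of a x] abs_dx_poisson_le[OF y, of b x] t da
    by (intro mult_mono) (auto simp: da_def db_def)
  also have "\<dots> = (t / pi^2) / (da * db)" by (simp add: power2_eq_square)
  finally have X: "y * \<bar>hinv x y * dy_poisson a x y * dx_poisson b x y\<bar> \<le> (t / pi^2) / (da * db)" .
  have "t \<le> 2 * pi * (y + 2)" "t \<le> 2 * pi * da" "t \<le> 2 * pi * db"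
    using y_mult_hinv_le[OF y] y_mult_hinv_le_dist[OF y a] y_mult_hinv_le_dist[OF y b]
    by (simp_all add: t_def da_def db_def)
  moreover have "2 * pi * (y + 2) \<le> 2 * (1 + y) * pi^2"
    using mult_left_mono[OF plus_two_le_pi_mult[of y], of "2 * pi"] y
    by (simp add: power2_eq_square mult_ac)
  moreover have "2 * pi * d \<le> 2 * d * pi^2" if "0 \<le> d" for d
  proof -
    have "pi \<le> pi^2" using pi_gt3 by (simp add: power2_eq_square)
    then show ?thesis using mult_left_mono[of pi "pi^2" "2 * d"] that by (simp add: mult_ac)
  qed
  ultimately have "t / pi^2 \<le> 2 * (1 + y)" "t / pi^2 \<le> 2 * da" "t / pi^2 \<le> 2 * db"
    using da db by (auto simp: divide_le_eq intro: order_trans)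
  from pole_pair_boundI[OF da db X this] show ?thesis by (simp only: da_def db_def)
qed

lemma pole_pair_bound_dx_hinv_term:
  assumes y: "0 < y" and a: "cos a = 1" and b: "cos b = 1"
  shows "pole_pair_bound y ((x - a)^2 + y^2) ((x - b)^2 + y^2)
           (y * \<bar>poisson b x y * dy_poisson a x y * dx_hinv x y\<bar>)"
proof -
  define da db where "da = (x - a)^2 + y^2" and "db = (x - b)^2 + y^2"
  have da: "0 < da" and db: "0 < db" using y by (auto simp: da_def db_def dist_sq_pos)
  have s: "y \<le> sinh y" "0 < sinh y" using sinh_ge_self[of y] y by auto
  define w where "w = y * \<bar>sin x\<bar>"
  have y_dx_hinv: "y * \<bar>dx_hinv x y\<bar> \<le> 2 * pi * \<bar>sin x\<bar>"
  proof -
    have "y * \<bar>dx_hinv x y\<bar> = (2 * pi * \<bar>sin x\<bar>) * (y / sinh y)"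
      unfolding dx_hinv_def using s by (simp add: abs_divide abs_mult)
    also have "\<dots> \<le> (2 * pi * \<bar>sin x\<bar>) * 1" using s y by (intro mult_left_mono) auto
    finally show ?thesis by simp
  qed
  have "y * \<bar>poisson b x y * dy_poisson a x y * dx_hinv x y\<bar>
      = \<bar>poisson b x y\<bar> * \<bar>dy_poisson a x y\<bar> * (y * \<bar>dx_hinv x y\<bar>)"
    using y by (simp add: abs_mult)
  also have "\<dots> \<le> (y / (pi * db)) * (1 / (pi * da)) * (2 * pi * \<bar>sin x\<bar>)"
  proof (rule mult_mono)
    show "\<bar>poisson b x y\<bar> * \<bar>dy_poisson a x y\<bar> \<le> y / (pi * db) * (1 / (pi * da))"
      using abs_poisson[OF y, of b x] abs_dy_poisson_le[OF y, of a x] y da db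
      by (intro mult_mono) (auto simp: da_def db_def)
  qed (use y_dx_hinv y da db in auto)
  also have "\<dots> = (2 * w / pi) / (da * db)" by (simp add: w_def mult_ac)
  finally have X: "y * \<bar>poisson b x y * dy_poisson a x y * dx_hinv x y\<bar> \<le> (2 * w / pi) / (da * db)" .
  have "2 * w \<le> d" if "cos c = 1" "d = (x - c)^2 + y^2" for c d
  proof -
    have "\<bar>sin x\<bar> \<le> \<bar>x - c\<bar>"
      using cos_sin_shift_period(2)[OF \<open>cos c = 1\<close>] abs_sin_x_le_abs_x[of "x - c"] by simp
    then have "2 * w \<le> 2 * \<bar>x - c\<bar> * y" using y by (simp add: w_def mult.commute mult_left_mono)
    also have "\<dots> \<le> d" using two_abs_mult_le_sq_sum[of y "x - c"] y that(2) by simp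
    finally show ?thesis .
  qed
  then have "2 * w \<le> da" "2 * w \<le> db" using a b by (auto simp: da_def db_def)
  moreover have "w \<le> 1 + y"
  proof -
    have "y * \<bar>sin x\<bar> \<le> y * 1" using abs_sin_le_one[of x] y by (intro mult_left_mono) auto
    then show ?thesis by (simp add: w_def)
  qed
  moreover have w0: "0 \<le> w" using y by (simp add: w_def)
  moreover have "2 * w / pi \<le> 2 * w / 1" using w0 pi_gt3 by (intro divide_left_mono) auto
  ultimately have "2 * w / pi \<le> 2 * (1 + y)" "2 * w / pi \<le> 2 * da" "2 * w / pi \<le> 2 * db"
    by auto
  from pole_pair_boundI[OF da db X this] show ?thesis by (simp only: da_def db_def)
qed

lemma pole_pair_bound_dy_hinv_term:
  assumes y: "0 < y" and a: "cos a = 1" and b: "cos b = 1"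
  shows "pole_pair_bound y ((x - a)^2 + y^2) ((x - b)^2 + y^2)
           (y * \<bar>poisson b x y * dx_poisson a x y * dy_hinv x y\<bar>)"
proof -
  define da db where "da = (x - a)^2 + y^2" and "db = (x - b)^2 + y^2"
  have da: "0 < da" and db: "0 < db" using y by (auto simp: da_def db_def dist_sq_pos)
  have s: "0 < sinh y" using y by simp
  define w where "w = 2 * \<bar>x - a\<bar> * y"
  define v where "v = y^2 * \<bar>cos x * cosh y - 1\<bar> / (sinh y)^2"
  have "y * \<bar>poisson b x y * dx_poisson a x y * dy_hinv x y\<bar>
      = y * (y / (pi * db)) * (2 * \<bar>x - a\<bar> * y / (pi * da^2))
          * (2 * pi * \<bar>cos x * cosh y - 1\<bar> / (sinh y)^2)"
    unfolding abs_mult abs_poisson[OF y] abs_dx_poisson[OF y] da_def db_def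
    by (simp add: dy_hinv_def abs_mult abs_divide mult.assoc)
  also have "\<dots> = (2 * (w * v / da) / pi) / (da * db)"
    unfolding w_def v_def using s da db by (simp add: field_simps power2_eq_square)
  finally have X: "y * \<bar>poisson b x y * dx_poisson a x y * dy_hinv x y\<bar>
      \<le> (2 * (w * v / da) / pi) / (da * db)" by simp
  have w: "0 \<le> w" "w \<le> da"
    using two_abs_mult_le_sq_sum[of y "x - a"] y by (auto simp: w_def da_def)
  have v: "0 \<le> v" "v \<le> 2" "v \<le> da" "v \<le> db"
    using cos_cosh_bound[OF y, of x] cos_cosh_bound_dist[OF y a, of x]
      cos_cosh_bound_dist[OF y b, of x] s
    by (auto simp: v_def divide_le_eq da_def db_def mult.commute)
  have "w * v / da \<le> 2" "w * v / da \<le> da" "w * v / da \<le> db"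
    using w v da mult_mono[of w da v 2] mult_mono[of w da v da] mult_mono[of w da v db]
    by (auto simp: divide_le_eq mult.commute)
  moreover have "2 * (w * v / da) / pi \<le> 2 * (w * v / da) / 1"
    using w v da pi_gt3 by (intro divide_left_mono) auto
  moreover have "4 / pi \<le> 2" using pi_gt3 by (simp add: divide_le_eq)
  moreover have "2 * (w * v / da) / pi \<le> 2 * 2 / pi"
    using \<open>w * v / da \<le> 2\<close> pi_gt3 by (intro divide_right_mono) auto
  ultimately have "2 * (w * v / da) / pi \<le> 2 * (1 + y)"
    "2 * (w * v / da) / pi \<le> 2 * da" "2 * (w * v / da) / pi \<le> 2 * db"
    using y by auto
  from pole_pair_boundI[OF da db X this] show ?thesis by (simp only: da_def db_def)
qed

lemma dist_sq_ge_one_if_separated: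
  assumes "2 \<le> \<bar>a - b\<bar>" and "(x - a)^2 + y^2 < 1"
  shows "1 \<le> (x - b)^2 + (y::real)^2"
proof -
  have "(x - a)^2 < 1" using assms(2) by (smt (verit) zero_le_power2)
  then have "\<bar>x - a\<bar> < 1" by (simp add: abs_square_less_1)
  then have "1 \<le> \<bar>x - b\<bar>" using assms(1) by linarith
  then have "1 \<le> (x - b)^2" by (metis abs_ge_self one_le_power power2_abs order_trans abs_ge_zero)
  then show ?thesis by (smt (verit) zero_le_power2)
qed

lemma jj_expl_bound_poles:
  assumes y: "0 < y" and a: "cos a = 1" and b: "cos b = 1" and ab: "2 \<le> \<bar>a - b\<bar>"
  shows "y * \<bar>jj_expl a b x y\<bar> \<le> 48 * (1 + y) / ((1 + ((x - a)^2 + y^2)) * (1 + ((x - b)^2 + y^2)))"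
proof -
  define da db where "da = (x - a)^2 + y^2" and "db = (x - b)^2 + y^2"
  have da: "0 < da" and db: "0 < db" using y by (auto simp: da_def db_def dist_sq_pos)
  have sep: "da < 1 \<Longrightarrow> 1 \<le> db" "db < 1 \<Longrightarrow> 1 \<le> da"
    using dist_sq_ge_one_if_separated[OF ab] dist_sq_ge_one_if_separated[of b a] ab
    by (auto simp: da_def db_def abs_minus_commute)
  let ?B = "8 * (1 + y) / ((1 + da) * (1 + db))"
  have le_B: "t \<le> ?B" if "pole_pair_bound y da db t" for t
    using pole_pair_bound_le[OF that _ da db sep] y by simp
  have le_B': "t \<le> ?B" if "pole_pair_bound y db da t" for t
    using le_B that by (simp add: pole_pair_bound_commute)
  have "\<bar>jj_expl a b x y\<bar>
      \<le> \<bar>hinv x y * dy_poisson a x y * dx_poisson b x y\<bar> + \<bar>hinv x y * dy_poisson b x y * dx_poisson a x y\<bar>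
       + \<bar>poisson b x y * dy_poisson a x y * dx_hinv x y\<bar> + \<bar>poisson b x y * dx_poisson a x y * dy_hinv x y\<bar>
       + \<bar>poisson a x y * dy_poisson b x y * dx_hinv x y\<bar> + \<bar>poisson a x y * dx_poisson b x y * dy_hinv x y\<bar>"
    unfolding jj_expl_def by (simp add: algebra_simps)
  then have "y * \<bar>jj_expl a b x y\<bar>
      \<le> y * \<bar>hinv x y * dy_poisson a x y * dx_poisson b x y\<bar> + y * \<bar>hinv x y * dy_poisson b x y * dx_poisson a x y\<bar>
       + y * \<bar>poisson b x y * dy_poisson a x y * dx_hinv x y\<bar> + y * \<bar>poisson b x y * dx_poisson a x y * dy_hinv x y\<bar>
       + y * \<bar>poisson a x y * dy_poisson b x y * dx_hinv x y\<bar> + y * \<bar>poisson a x y * dx_poisson b x y * dy_hinv x y\<bar>"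
    using y by (simp add: distrib_left[symmetric] mult_left_mono)
  also have "\<dots> \<le> 6 * ?B"
    using le_B[OF pole_pair_bound_hinv_term[OF y a b, of x, folded da_def db_def]]
      le_B'[OF pole_pair_bound_hinv_term[OF y b a, of x, folded da_def db_def]]
      le_B[OF pole_pair_bound_dx_hinv_term[OF y a b, of x, folded da_def db_def]]
      le_B[OF pole_pair_bound_dy_hinv_term[OF y a b, of x, folded da_def db_def]]
      le_B'[OF pole_pair_bound_dx_hinv_term[OF y b a, of x, folded da_def db_def]]
      le_B'[OF pole_pair_bound_dy_hinv_term[OF y b a, of x, folded da_def db_def]]
    by linarith
  finally show ?thesis by (simp add: da_def db_def)
qed

lemma one_plus_norm_sq_le: "1 + x^2 + y^2 \<le> (2 + 2 * a^2) * (1 + ((x - a)^2 + (y::real)^2))"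
proof -
  have "(2 + 2 * a^2) * (1 + ((x - a)^2 + y^2)) - (1 + x^2 + y^2)
      = 1 + y^2 + (x - 2 * a)^2 + 2 * a^2 * ((x - a)^2 + y^2)"
    by (simp add: algebra_simps power2_eq_square)
  moreover have "0 \<le> 1 + y^2 + (x - 2 * a)^2 + 2 * a^2 * ((x - a)^2 + y^2)"
    by (intro add_nonneg_nonneg) auto
  ultimately show ?thesis by linarith
qed

lemma jj_expl_bound:
  assumes y: "0 < y" and a: "cos a = 1" and b: "cos b = 1" and ab: "2 \<le> \<bar>a - b\<bar>"
  shows "y * \<bar>jj_expl a b x y\<bar> \<le> 48 * (2 + 2 * a^2) * (2 + 2 * b^2) * (1 + y) / (1 + x^2 + y^2)^2"
proof -
  define r where "r = 1 + x^2 + y^2"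
  define ra rb where "ra = 1 + ((x - a)^2 + y^2)" and "rb = 1 + ((x - b)^2 + y^2)"
  have pos: "0 < r" "0 < ra" "0 < rb" by (auto simp: r_def ra_def rb_def add_pos_nonneg)
  have "r * r \<le> ((2 + 2 * a^2) * ra) * ((2 + 2 * b^2) * rb)"
    using one_plus_norm_sq_le[of x y a] one_plus_norm_sq_le[of x y b] pos
    by (intro mult_mono) (auto simp: r_def ra_def rb_def)
  then have "48 * (1 + y) * (r * r) \<le> 48 * (1 + y) * (((2 + 2 * a^2) * ra) * ((2 + 2 * b^2) * rb))"
    using y by (intro mult_left_mono) auto
  then have "48 * (1 + y) * r^2 \<le> 48 * (2 + 2 * a^2) * (2 + 2 * b^2) * (1 + y) * (ra * rb)"
    by (simp only: power2_eq_square mult_ac)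
  then have "48 * (1 + y) / (ra * rb) \<le> 48 * (2 + 2 * a^2) * (2 + 2 * b^2) * (1 + y) / r^2"
    using pos by (simp add: divide_simps)
  then show ?thesis
    using jj_expl_bound_poles[OF y a b ab, of x] by (simp add: r_def ra_def rb_def)
qed

section \<open>Bounds on the normalised Green function\<close>

lemma GG_div_poisson_eq:
  assumes y0: "0 < y0" and d: "0 < x^2 + (y - y0)^2"
  shows "GG y0 x y / poisson b 0 y0
       = ln (1 + 4 * y * y0 / (x^2 + (y - y0)^2)) * ((b^2 + y0^2) / (2 * y0))"
proof -
  have "(x^2 + (y + y0)^2) / (x^2 + (y - y0)^2) = 1 + 4 * y * y0 / (x^2 + (y - y0)^2)"
    using d by (simp add: field_simps power2_eq_square)
  then show ?thesis using y0 by (simp add: GG_def poisson_def field_simps)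
qed

lemma sq_sum_div_le:
  assumes "\<bar>b\<bar> \<le> y0" and "0 < (y0::real)"
  shows "(b^2 + y0^2) / (2 * y0) \<le> y0"
proof -
  have "b^2 \<le> y0^2" using assms(1) by (metis abs_ge_zero power2_abs power_mono)
  then show ?thesis using assms(2) by (simp add: divide_le_eq power2_eq_square)
qed

lemma GG_div_poisson_bound_near:
  assumes y: "0 < y" and y0: "0 < y0" and b: "\<bar>b\<bar> \<le> y0" and near: "y \<le> y0 / 2"
  shows "0 \<le> GG y0 x y / poisson b 0 y0 \<and> GG y0 x y / poisson b 0 y0 \<le> 16 * y"
proof -
  define d where "d = x^2 + (y - y0)^2"
  have "(y0 / 2)^2 \<le> (y0 - y)^2" using near y0 by (intro power_mono) auto
  then have "y0^2 / 4 \<le> (y - y0)^2" by (simp add: power_divide power2_commute)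
  then have d_ge: "y0^2 / 4 \<le> d" unfolding d_def using zero_le_power2[of x] by linarith
  then have d: "0 < d" using y0 by (smt (verit) zero_less_power divide_pos_pos)
  define t where "t = 4 * y * y0 / d"
  have t: "0 \<le> t" using y y0 d by (simp add: t_def)
  have "t \<le> 4 * y * y0 / (y0^2 / 4)"
    unfolding t_def using d_ge y y0 mult_pos_pos[OF d, of "y0^2 / 4"] by (intro divide_left_mono) auto
  also have "\<dots> = 16 * y / y0" using y0 by (simp add: field_simps power2_eq_square)
  finally have "ln (1 + t) \<le> 16 * y / y0" using ln_add_one_self_le_self[OF t] by linarith
  then have "ln (1 + t) * ((b^2 + y0^2) / (2 * y0)) \<le> (16 * y / y0) * y0"
    using t y y0 sq_sum_div_le[OF b y0] by (intro mult_mono) auto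
  moreover have "0 \<le> ln (1 + t) * ((b^2 + y0^2) / (2 * y0))" using t y0 by simp
  ultimately show ?thesis
    using GG_div_poisson_eq[OF y0 d[unfolded d_def], of b] y0 by (simp add: t_def d_def)
qed

lemma ln_one_plus_le_four_root:
  assumes t: "0 \<le> (t::real)"
  shows "ln (1 + t) \<le> 4 * sqrt (sqrt t)"
proof -
  have "ln (1 + t) = 4 * ln (sqrt (sqrt (1 + t)))" using t by (simp add: ln_sqrt)
  also have "\<dots> \<le> 4 * (sqrt (sqrt (1 + t)) - 1)" using t by (intro mult_left_mono ln_le_minus_one) auto
  also have "\<dots> \<le> 4 * sqrt (sqrt t)"
  proof -
    have "sqrt (1 + t) \<le> 1 + sqrt t" using sqrt_add_le_add_sqrt[of 1 t] t by simp
    then have "sqrt (sqrt (1 + t)) \<le> sqrt (1 + sqrt t)" by (rule real_sqrt_le_mono)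
    also have "\<dots> \<le> 1 + sqrt (sqrt t)" using sqrt_add_le_add_sqrt[of 1 "sqrt t"] t by simp
    finally show ?thesis by simp
  qed
  finally show ?thesis .
qed

lemma GG_div_poisson_bound_far:
  assumes y: "0 < y" and y0: "0 < y0" and b: "\<bar>b\<bar> \<le> y0" and far: "y0 / 2 < y" and x: "x \<noteq> 0"
  shows "0 \<le> GG y0 x y / poisson b 0 y0 \<and> GG y0 x y / poisson b 0 y0 \<le> 16 * y * sqrt (y / \<bar>x\<bar>)"
proof -
  define d where "d = x^2 + (y - y0)^2"
  have x2: "0 < x^2" using x by simp
  have d_ge: "x^2 \<le> d" by (simp add: d_def)
  then have d: "0 < d" using x2 by linarith
  define t where "t = 4 * y * y0 / d"
  have t: "0 \<le> t" using y y0 d by (simp add: t_def)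
  have "t \<le> 4 * y * y0 / x^2" unfolding t_def using d_ge y y0 mult_pos_pos[OF d x2] by (intro divide_left_mono) auto
  also have "\<dots> \<le> 8 * y^2 / x^2" using y y0 far x2 by (intro divide_right_mono) (auto simp: power2_eq_square)
  finally have "ln (1 + t) \<le> 4 * sqrt (sqrt (8 * y^2 / x^2))"
    using ln_one_plus_le_four_root[OF t] t by (smt (verit) mult_left_mono real_sqrt_le_mono)
  also have "sqrt (sqrt (8 * y^2 / x^2)) = sqrt (sqrt 8) * sqrt (y / \<bar>x\<bar>)"
    using y by (simp add: real_sqrt_mult real_sqrt_divide)
  also have "4 * (sqrt (sqrt 8) * sqrt (y / \<bar>x\<bar>)) \<le> 4 * (2 * sqrt (y / \<bar>x\<bar>))"
  proof -
    have "sqrt (sqrt 8) \<le> (2::real)"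
      using real_sqrt_le_mono[of 8 16] real_sqrt_le_mono[of "sqrt 8" 4] by simp
    then show ?thesis using y by (intro mult_left_mono mult_right_mono) auto
  qed
  finally have "ln (1 + t) \<le> 8 * sqrt (y / \<bar>x\<bar>)" by simp
  then have "ln (1 + t) * ((b^2 + y0^2) / (2 * y0)) \<le> (8 * sqrt (y / \<bar>x\<bar>)) * (2 * y)"
    using t y0 sq_sum_div_le[OF b y0] far by (intro mult_mono) auto
  moreover have "0 \<le> ln (1 + t) * ((b^2 + y0^2) / (2 * y0))" using t y0 by simp
  ultimately show ?thesis
    using GG_div_poisson_eq[OF y0 d[unfolded d_def], of b] y0 by (simp add: t_def d_def mult_ac)
qed

lemma GG_div_poisson_tendsto:
  "0 < y \<Longrightarrow> ((\<lambda>y0. GG y0 x y / poisson b 0 y0) \<longlongrightarrow> 2 * y) at_top"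
  unfolding GG_def poisson_def by real_asymp

section \<open>An integrable majorant\<close>

definition flat_decay :: "real \<Rightarrow> real" where
  "flat_decay s = (if 0 \<le> s \<and> s \<le> 1 then 1 else if 1 < s then s powr (-3/2) else 0)"

definition cusp_decay :: "real \<Rightarrow> real" where
  "cusp_decay s = (if 0 < s \<and> s \<le> 1 then s powr (-1/2) else if 1 < s then s powr (-3/2) else 0)"

lemma powr_minus_three_halves: "0 < s \<Longrightarrow> s powr - (3 / 2) = 1 / (s * sqrt s)"
proof -
  assume s: "0 < s"
  have "s powr (3/2) = s powr (1 + 1/2)" by simp
  also have "\<dots> = s * sqrt s" using s by (simp only: powr_add powr_one powr_half_sqrt less_imp_le)
  finally show ?thesis using s by (simp add: powr_minus_divide)
qed

lemma powr_minus_half: "0 < s \<Longrightarrow> s powr - (1 / 2) = 1 / sqrt s"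
  by (simp add: powr_minus_divide powr_half_sqrt)

lemma flat_decay_ge_one: "1 \<le> s \<Longrightarrow> flat_decay s = 1 / (s * sqrt s)"
  by (cases "s = 1") (auto simp: flat_decay_def powr_minus_three_halves)

lemma flat_decay_le_one: "0 \<le> s \<Longrightarrow> s \<le> 1 \<Longrightarrow> flat_decay s = 1"
  by (simp add: flat_decay_def)

lemma cusp_decay_ge_one: "1 \<le> s \<Longrightarrow> cusp_decay s = 1 / (s * sqrt s)"
  by (cases "s = 1") (auto simp: cusp_decay_def powr_minus_three_halves powr_minus_half)

lemma cusp_decay_le_one: "0 < s \<Longrightarrow> s \<le> 1 \<Longrightarrow> cusp_decay s = 1 / sqrt s"
  by (simp add: cusp_decay_def powr_minus_half)

lemma flat_decay_nonneg: "0 \<le> flat_decay s"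
  by (simp add: flat_decay_def)

lemma flat_decay_le_cusp_decay: "0 < s \<Longrightarrow> flat_decay s \<le> cusp_decay s"
  by (cases "s \<le> 1") (auto simp: flat_decay_le_one cusp_decay_le_one flat_decay_ge_one
      cusp_decay_ge_one)

lemma integrable_powr_tail: "integrable lborel (\<lambda>s::real. indicator {1..} s * s powr (-3/2))"
proof -
  have "(\<lambda>s::real. s powr (-3/2)) integrable_on {1..}"
    using has_integral_powr_to_inf[of "-3/2" 1] unfolding integrable_on_def by auto
  then have "(\<lambda>s::real. s powr (-3/2)) absolutely_integrable_on {1..}"
    by (subst absolutely_integrable_on_iff_nonneg) auto
  then show ?thesis
    unfolding set_integrable_def by (subst (asm) integrable_completion) auto
qed

lemma integrable_powr_head: "integrable lborel (\<lambda>s::real. indicator {0..1} s * s powr (-1/2))"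
proof -
  have "(\<lambda>s::real. s powr (-1/2)) integrable_on {0..1}"
    by (rule integrable_on_powr_from_0) auto
  then have "(\<lambda>s::real. s powr (-1/2)) absolutely_integrable_on {0..1}"
    by (subst absolutely_integrable_on_iff_nonneg) auto
  then show ?thesis
    unfolding set_integrable_def by (subst (asm) integrable_completion) auto
qed

lemma integrable_flat_decay: "integrable lborel flat_decay"
proof (rule Bochner_Integration.integrable_bound)
  show "integrable lborel (\<lambda>s::real. indicator {0..1} s + indicator {1..} s * s powr (-3/2))"
    using integrable_real_indicator[of "{0..1}"] integrable_powr_tail by auto
  show "flat_decay \<in> borel_measurable lborel" unfolding flat_decay_def by measurable
qed (auto simp: flat_decay_def indicator_def)

lemma integrable_cusp_decay: "integrable lborel cusp_decay"
proof (rule Bochner_Integration.integrable_bound)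
  show "integrable lborel (\<lambda>s::real. indicator {0..1} s * s powr (-1/2) + indicator {1..} s * s powr (-3/2))"
    using integrable_powr_head integrable_powr_tail by (rule Bochner_Integration.integrable_add)
  show "cusp_decay \<in> borel_measurable lborel" unfolding cusp_decay_def by measurable
qed (auto simp: cusp_decay_def indicator_def)

lemma integrable_cusp_decay_abs: "integrable lborel (\<lambda>x. cusp_decay \<bar>x\<bar>)"
proof -
  have "integrable lborel (\<lambda>x. cusp_decay (0 + (-1) * x))"
    using integrable_cusp_decay by (rule lborel_integrable_real_affine) simp
  then have "integrable lborel (\<lambda>x. cusp_decay x + cusp_decay (- x))"
    using integrable_cusp_decay by simp
  moreover have "cusp_decay \<bar>x\<bar> = cusp_decay x + cusp_decay (- x)" for x
    by (simp add: cusp_decay_def)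
  ultimately show ?thesis by simp
qed

lemma div_le_div_of_cross_mult: "a * d \<le> c * b \<Longrightarrow> 0 < (b::real) \<Longrightarrow> 0 < d \<Longrightarrow> a / b \<le> c / d"
  by (simp add: divide_simps)

lemma sqrt_le_self: "1 \<le> (y::real) \<Longrightarrow> sqrt y \<le> y"
  using real_sqrt_le_mono[of y "y * y"] by simp

lemma cube_mult_le_sq_sum_sq:
  assumes "0 \<le> X" "0 \<le> y"
  shows "y^3 * X \<le> ((X::real)^2 + y^2)^2"
proof -
  have "0 \<le> y^2 * (y - X)^2" "0 \<le> X^2 * X^2" "0 \<le> X^2 * y^2" "0 \<le> y^2 * y^2" by simp_all
  then show ?thesis by (simp add: power2_eq_square power3_eq_cube algebra_simps)
qed

lemma sq_mult_sqrt_le_sq_sum_sq: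
  assumes X: "1 \<le> X" and y: "1 \<le> y"
  shows "y^2 * (X * (sqrt X * sqrt y)) \<le> ((X::real)^2 + y^2)^2"
proof -
  have "0 \<le> (sqrt X - sqrt y)^2" by simp
  then have "sqrt X * sqrt y \<le> (X + y) / 2" using X y by (simp add: power2_eq_square algebra_simps)
  then have "y^2 * (X * (sqrt X * sqrt y)) \<le> y^2 * (X * ((X + y) / 2))"
    using X by (intro mult_left_mono) auto
  also have "\<dots> \<le> (X^2 + y^2)^2"
  proof -
    have "0 \<le> y^2 * (y - X)^2" "0 \<le> X^2 * X^2" "0 \<le> X^2 * y^2" "0 \<le> y^2 * y^2" by simp_all
    then show ?thesis by (simp add: power2_eq_square algebra_simps)
  qed
  finally show ?thesis .
qed

lemma decay_quotient_le_flat: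
  assumes X: "0 \<le> X" and y: "0 < y"
  shows "(1 + y) / (1 + X^2 + y^2)^2 \<le> 2 * flat_decay X * flat_decay y"
proof -
  define r where "r = 1 + X^2 + y^2"
  have r1: "1 \<le> r" and rX: "X^2 \<le> r" and ry: "y^2 \<le> r" by (auto simp: r_def)
  have rr: "0 < r^2" using r1 by simp
  have r2: "r \<le> r^2" using r1 by (simp add: power2_eq_square)
  have y4: "(1 + y) * (y * sqrt y) \<le> 2 * r^2" if "1 \<le> y"
  proof -
    have "(1 + y) * (y * sqrt y) \<le> (2 * y) * (y * y)" using that sqrt_le_self[OF that] by (intro mult_mono) auto
    also have "\<dots> \<le> 2 * (y^2 * y^2)" using that by (simp add: power2_eq_square)
    also have "\<dots> \<le> 2 * (r * r)" using ry r1 by (intro mult_left_mono mult_mono) auto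
    finally show ?thesis by (simp add: power2_eq_square)
  qed
  consider "X \<le> 1" "y \<le> 1" | "X \<le> 1" "1 \<le> y" | "1 \<le> X" "y \<le> 1" | "1 \<le> X" "1 \<le> y" by linarith
  then show ?thesis
  proof cases
    case 1
    then have "(1 + y) / r^2 \<le> 2" using r1 r2 rr by (simp add: divide_le_eq)
    then show ?thesis using 1 X y by (simp add: flat_decay_le_one r_def)
  next
    case 2
    then have "(1 + y) / r^2 \<le> 2 / (y * sqrt y)" using rr y4 by (intro div_le_div_of_cross_mult) auto
    then show ?thesis using 2 X by (simp add: flat_decay_le_one flat_decay_ge_one r_def)
  next
    case 3
    have "(1 + y) * (X * sqrt X) \<le> 2 * (X * X)"
      using 3 sqrt_le_self[OF 3(1)] y by (intro mult_mono) auto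
    also have "\<dots> \<le> 2 * r^2" using rX r2 by (simp add: power2_eq_square)
    finally have "(1 + y) / r^2 \<le> 2 / (X * sqrt X)" using 3 rr by (intro div_le_div_of_cross_mult) auto
    then show ?thesis using 3 y by (simp add: flat_decay_le_one flat_decay_ge_one r_def)
  next
    case 4
    have "(1 + y) * ((X * sqrt X) * (y * sqrt y)) \<le> (2 * y) * ((X * sqrt X) * (y * sqrt y))"
      using 4 by (intro mult_right_mono) auto
    also have "\<dots> = 2 * (y^2 * (X * (sqrt X * sqrt y)))" by (simp add: power2_eq_square mult_ac)
    also have "\<dots> \<le> 2 * (X^2 + y^2)^2" using sq_mult_sqrt_le_sq_sum_sq[OF 4] by simp
    also have "\<dots> \<le> 2 * r^2" unfolding r_def by (intro mult_left_mono power_mono) auto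
    finally have "(1 + y) / r^2 \<le> 2 / ((X * sqrt X) * (y * sqrt y))"
      using 4 rr by (intro div_le_div_of_cross_mult) auto
    then show ?thesis using 4 by (simp add: flat_decay_ge_one mult_ac r_def)
  qed
qed

lemma decay_quotient_sqrt_le_cusp:
  assumes X: "0 < X" and y: "1 \<le> y"
  shows "sqrt (y / X) * (1 + y) / (1 + X^2 + y^2)^2 \<le> 2 * cusp_decay X * flat_decay y"
proof -
  define r where "r = 1 + X^2 + y^2"
  have r1: "1 \<le> r" and ry: "y^2 \<le> r" by (auto simp: r_def)
  have rr: "0 < r^2" using r1 by simp
  have sx: "0 < sqrt X" using X by simp
  have syy: "sqrt y * sqrt y = y" using y by simp
  have e: "sqrt (y / X) * (1 + y) / r^2 = (sqrt y * (1 + y)) / (sqrt X * r^2)"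
    by (simp add: real_sqrt_divide)
  have y4: "(1 + y) * y^2 \<le> 2 * r^2"
  proof -
    have "(1 + y) * y^2 \<le> (2 * y) * y^2" using y by (intro mult_right_mono) auto
    also have "\<dots> \<le> 2 * (y^2 * y^2)" using y by (simp add: power2_eq_square)
    also have "\<dots> \<le> 2 * (r * r)" using ry r1 by (intro mult_left_mono mult_mono) auto
    finally show ?thesis by (simp add: power2_eq_square)
  qed
  consider "X \<le> 1" | "1 \<le> X" by linarith
  then show ?thesis
  proof cases
    case 1
    have "(sqrt y * (1 + y)) * (sqrt X * (y * sqrt y)) = sqrt X * ((1 + y) * y^2)"
      using syy by (simp add: power2_eq_square mult_ac)
    also have "\<dots> \<le> sqrt X * (2 * r^2)" using y4 sx by (intro mult_left_mono) auto
    also have "\<dots> = 2 * (sqrt X * r^2)" by simp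
    finally have "(sqrt y * (1 + y)) / (sqrt X * r^2) \<le> 2 / (sqrt X * (y * sqrt y))"
      by (rule div_le_div_of_cross_mult) (use sx rr y in auto)
    then show ?thesis using 1 X y e by (simp add: cusp_decay_le_one flat_decay_ge_one r_def)
  next
    case 2
    have "(1 + y) * y^2 * X \<le> (2 * y) * y^2 * X" using y X by (intro mult_right_mono) auto
    also have "\<dots> = 2 * (y^3 * X)" by (simp add: power2_eq_square power3_eq_cube mult_ac)
    also have "\<dots> \<le> 2 * r^2"
    proof -
      have "(X^2 + y^2)^2 \<le> r^2" unfolding r_def by (intro power_mono) auto
      then show ?thesis using cube_mult_le_sq_sum_sq[of X y] X y by simp
    qed
    finally have main: "(1 + y) * y^2 * X \<le> 2 * r^2" .
    have "(sqrt y * (1 + y)) * ((X * sqrt X) * (y * sqrt y)) = sqrt X * ((1 + y) * y^2 * X)"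
      using syy by (simp add: power2_eq_square mult_ac)
    also have "\<dots> \<le> sqrt X * (2 * r^2)" using main sx by (intro mult_left_mono) auto
    also have "\<dots> = 2 * (sqrt X * r^2)" by simp
    finally have "(sqrt y * (1 + y)) / (sqrt X * r^2) \<le> 2 / ((X * sqrt X) * (y * sqrt y))"
      by (rule div_le_div_of_cross_mult) (use sx rr y X in auto)
    then show ?thesis using 2 X y e by (simp add: cusp_decay_ge_one flat_decay_ge_one r_def)
  qed
qed

lemma GG_div_poisson_mult_le:
  assumes y: "0 < y" and x: "x \<noteq> 0" and y0: "2 \<le> y0" and b: "\<bar>b\<bar> \<le> y0" and K: "0 \<le> K"
    and J: "y * \<bar>J\<bar> \<le> K * (1 + y) / (1 + x^2 + y^2)^2"
  shows "\<bar>GG y0 x y / poisson b 0 y0 * J\<bar> \<le> 32 * K * cusp_decay \<bar>x\<bar> * flat_decay y"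
proof -
  let ?Q = "GG y0 x y / poisson b 0 y0"
  have y0': "0 < y0" using y0 by simp
  have x': "0 < \<bar>x\<bar>" using x by simp
  have flat_y: "0 \<le> flat_decay y" by (rule flat_decay_nonneg)
  show ?thesis
  proof (cases "y \<le> y0 / 2")
    case True
    note Q = GG_div_poisson_bound_near[OF y y0' b True, of x]
    have "\<bar>?Q * J\<bar> = ?Q * \<bar>J\<bar>" by (simp only: abs_mult abs_of_nonneg[OF conjunct1[OF Q]])
    also have "\<dots> \<le> (16 * y) * \<bar>J\<bar>" using Q by (intro mult_right_mono) auto
    also have "\<dots> \<le> 16 * (K * ((1 + y) / (1 + \<bar>x\<bar>^2 + y^2)^2))" using J by simp
    also have "\<dots> \<le> 16 * (K * (2 * flat_decay \<bar>x\<bar> * flat_decay y))"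
      using decay_quotient_le_flat[of "\<bar>x\<bar>" y] y K by (intro mult_left_mono) auto
    also have "\<dots> \<le> 16 * (K * (2 * cusp_decay \<bar>x\<bar> * flat_decay y))"
      using flat_decay_le_cusp_decay[OF x'] K flat_y by (intro mult_left_mono mult_right_mono) auto
    finally show ?thesis by (simp add: mult_ac)
  next
    case False
    then have far: "y0 / 2 < y" by simp
    note Q = GG_div_poisson_bound_far[OF y y0' b far x]
    have "\<bar>?Q * J\<bar> = ?Q * \<bar>J\<bar>" by (simp only: abs_mult abs_of_nonneg[OF conjunct1[OF Q]])
    also have "\<dots> \<le> (16 * y * sqrt (y / \<bar>x\<bar>)) * \<bar>J\<bar>" using Q by (intro mult_right_mono) auto
    also have "\<dots> = 16 * sqrt (y / \<bar>x\<bar>) * (y * \<bar>J\<bar>)" by (simp add: mult_ac)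
    also have "\<dots> \<le> 16 * sqrt (y / \<bar>x\<bar>) * (K * ((1 + y) / (1 + \<bar>x\<bar>^2 + y^2)^2))"
      using J y by (intro mult_left_mono) auto
    also have "\<dots> = 16 * K * (sqrt (y / \<bar>x\<bar>) * (1 + y) / (1 + \<bar>x\<bar>^2 + y^2)^2)" by simp
    also have "\<dots> \<le> 16 * K * (2 * cusp_decay \<bar>x\<bar> * flat_decay y)"
      using decay_quotient_sqrt_le_cusp[OF x'] far y0 K by (intro mult_left_mono) auto
    finally show ?thesis by (simp add: mult_ac)
  qed
qed

lemma borel_measurable_sinh [measurable]: "(sinh :: real \<Rightarrow> real) \<in> borel_measurable borel"
  by (intro borel_measurable_continuous_onI continuous_intros)

lemma borel_measurable_cosh [measurable]: "(cosh :: real \<Rightarrow> real) \<in> borel_measurable borel"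
  by (intro borel_measurable_continuous_onI continuous_intros)

lemma open_upper_half: "open upper_half"
  unfolding upper_half_def by (intro open_Collect_less continuous_intros)

lemma upper_half_in_sets_pair [measurable]: "upper_half \<in> sets (borel \<Otimes>\<^sub>M borel)"
  by (subst borel_prod) (rule borel_open[OF open_upper_half])

lemma borel_measurable_jj_expl [measurable]:
  "(\<lambda>z. jj_expl a b (fst z) (snd z)) \<in> borel_measurable (borel \<Otimes>\<^sub>M borel)"
  unfolding jj_expl_def hinv_eq poisson_def dx_poisson_def dy_poisson_def dx_hinv_def dy_hinv_def
  by measurable

lemma borel_measurable_GG [measurable]:
  "(\<lambda>z. GG y0 (fst z) (snd z)) \<in> borel_measurable (borel \<Otimes>\<^sub>M borel)"
  unfolding GG_def by measurable

lemma AE_fst_nonzero: "AE z in (lborel :: (real \<times> real) measure). fst z \<noteq> 0"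
proof -
  have "emeasure (lborel \<Otimes>\<^sub>M lborel) ({0::real} \<times> (UNIV :: real set)) = 0"
    by (subst lborel.emeasure_pair_measure_Times) auto
  moreover have "{0::real} \<times> (UNIV :: real set) \<in> sets (lborel \<Otimes>\<^sub>M lborel)"
    by (intro pair_measureI) auto
  ultimately have "{0::real} \<times> (UNIV :: real set) \<in> null_sets (lborel \<Otimes>\<^sub>M lborel)"
    by (simp add: null_sets_def)
  then have "{0::real} \<times> (UNIV :: real set) \<in> null_sets lborel"
    by (simp only: lborel_prod)
  then show ?thesis by (rule AE_I') auto
qed

lemma set_borel_measurable_lborel_pair:
  assumes "(\<lambda>z. indicator upper_half z * f z) \<in> borel_measurable (borel \<Otimes>\<^sub>M borel)"
  shows "set_borel_measurable lborel upper_half (f :: real \<times> real \<Rightarrow> real)"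
  using assms unfolding set_borel_measurable_def measurable_lborel2 borel_prod by simp

lemma GG_jj_expl_dominated_convergence:
  assumes a: "cos a = 1" and b: "cos b = 1" and ab: "2 \<le> \<bar>a - b\<bar>"
  shows "(\<forall>\<^sub>F y0 in at_top. set_integrable lborel upper_half
            (\<lambda>z. GG y0 (fst z) (snd z) / poisson b 0 y0 * jj_expl a b (fst z) (snd z)))
    \<and> set_integrable lborel upper_half (\<lambda>z. 2 * snd z * jj_expl a b (fst z) (snd z))
    \<and> ((\<lambda>y0. LINT z:upper_half|lborel. GG y0 (fst z) (snd z) / poisson b 0 y0 * jj_expl a b (fst z) (snd z))
        \<longlongrightarrow> (LINT z:upper_half|lborel. 2 * snd z * jj_expl a b (fst z) (snd z))) at_top"
proof -
  define K where "K = 48 * (2 + 2 * a^2) * (2 + 2 * b^2)"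
  have K: "0 \<le> K" by (simp add: K_def)
  let ?s = "\<lambda>y0 z. GG y0 (fst z) (snd z) / poisson b 0 y0 * jj_expl a b (fst z) (snd z)"
  let ?w = "\<lambda>z. 32 * K * cusp_decay \<bar>fst z\<bar> * flat_decay (snd z)"
  have bound: "\<bar>?s y0 z\<bar> \<le> ?w z" if "max 2 \<bar>b\<bar> \<le> y0" "fst z \<noteq> 0" "z \<in> upper_half" for y0 z
  proof -
    have y: "0 < snd z" using that(3) by (simp add: upper_half_def)
    show ?thesis
      using that(1)
      by (intro GG_div_poisson_mult_le[OF y that(2) _ _ K jj_expl_bound[OF y a b ab, folded K_def]]) auto
  qed
  show ?thesis
  proof (rule set_integral_dominated_convergence_at_top[where w = ?w])
    show "set_borel_measurable lborel upper_half (\<lambda>z. 2 * snd z * jj_expl a b (fst z) (snd z))"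
      "set_borel_measurable lborel upper_half (?s y0)" for y0
      by (intro set_borel_measurable_lborel_pair; measurable)+
    show "set_integrable lborel upper_half ?w"
      unfolding set_integrable_def
      using integrable_lborel_prod_mult[OF integrable_cusp_decay_abs integrable_flat_decay]
      by (intro integrable_mult_indicator) (auto simp: open_upper_half mult.assoc)
    show "AE z\<in>upper_half in lborel. ((\<lambda>y0. ?s y0 z) \<longlongrightarrow> 2 * snd z * jj_expl a b (fst z) (snd z)) at_top"
      by (intro AE_I2 impI tendsto_mult_right GG_div_poisson_tendsto) (simp add: upper_half_def)
    show "\<forall>\<^sub>F y0 in at_top. AE z\<in>upper_half in lborel. \<bar>?s y0 z\<bar> \<le> ?w z"
      by (rule eventually_at_top_linorderI[of "max 2 \<bar>b\<bar>"], rule AE_mp[OF AE_fst_nonzero], rule AE_I2)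
        (blast intro: bound)
  qed
qed

lemma two_le_abs_diff_two_pi_int:
  assumes "m \<noteq> n"
  shows "2 \<le> \<bar>2 * pi * of_int m - 2 * pi * of_int n\<bar>"
proof -
  have "1 \<le> \<bar>real_of_int (m - n)\<bar>" using assms by linarith
  then have "2 * 1 \<le> 2 * pi * \<bar>real_of_int m - real_of_int n\<bar>"
    using pi_gt3 by (intro mult_mono) auto
  then show ?thesis by (simp add: abs_mult right_diff_distrib[symmetric])
qed

theorem lemma3p4:
  fixes m n :: int
  shows "(\<forall>\<^sub>F y0 in at_top.
            set_integrable lborel upper_half
              (\<lambda>z. GG y0 (fst z) (snd z) / pk n 0 y0 * jj m n (fst z) (snd z)))
         \<and> set_integrable lborel upper_half (\<lambda>z. 2 * snd z * jj m n (fst z) (snd z))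
         \<and> ((\<lambda>y0. LINT z : upper_half | lborel.
                 GG y0 (fst z) (snd z) / pk n 0 y0 * jj m n (fst z) (snd z))
             \<longlongrightarrow> (LINT z : upper_half | lborel. 2 * snd z * jj m n (fst z) (snd z))) at_top"
proof (cases "m = n")
  case True
  then show ?thesis by (simp add: jj_self set_integrable_def set_lebesgue_integral_def)
next
  case False
  define a b where "a = 2 * pi * of_int m" and "b = 2 * pi * of_int n"
  have ab: "2 \<le> \<bar>a - b\<bar>" unfolding a_def b_def by (rule two_le_abs_diff_two_pi_int[OF False])
  have "cos a = 1" "cos b = 1" unfolding a_def b_def by (rule cos_int_2pin)+
  note lim = GG_jj_expl_dominated_convergence[OF this ab]
  have jj: "jj m n (fst z) (snd z) = jj_expl a b (fst z) (snd z)" if "z \<in> upper_half" for z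
    using that by (simp add: jj_eq_jj_expl upper_half_def a_def b_def)
  have "set_integrable lborel upper_half (\<lambda>z. g z * jj m n (fst z) (snd z))
      = set_integrable lborel upper_half (\<lambda>z. g z * jj_expl a b (fst z) (snd z))" for g
    by (rule set_integrable_cong) (simp_all add: jj)
  moreover have "(LINT z:upper_half|lborel. g z * jj m n (fst z) (snd z))
      = (LINT z:upper_half|lborel. g z * jj_expl a b (fst z) (snd z))" for g
    by (rule set_lebesgue_integral_cong) (simp_all add: jj open_upper_half)
  moreover have "pk n 0 y0 = poisson b 0 y0" for y0 by (simp add: pk_eq_poisson b_def)
  ultimately show ?thesis using lim by (simp only:)
qed

end
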